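(* Let $c\in\mathbb{R}$, $\beta\geq 0$ and $q\in(0,1)$. Then $$Z_{\beta,q,c}=\sum_{\sigma\in\mathcal{B}} e^{-\beta H(\sigma)}q^{f_c(\sigma)}=e^{-\beta}\prod_{i=1}^\infty\big(1+(e^{-2\beta}-1)q^{2i}\big)\big(1+q^{2(i-c)}\big)\big(1+q^{2(i-1+c)}\big).$$
   Context: Spin configurations are $\sigma=(\sigma_i)_{i\in\mathbb{Z}}\in\{-1,+1\}^{\mathbb{Z}}$. The set of blocking configurations is $\mathcal{B}=\{\sigma\in\{-1,+1\}^{\mathbb{Z}}: \exists a,b\in\mathbb{Z}\text{ such that } \sigma_{a-i}=-1,\ \sigma_{b+i}=+1\ \forall i\in\mathbb{N}\}$. The homogeneous Hamiltonian is $H(\sigma)=\sum_{i\in\mathbb{Z}}\mathbb{1}_{\{\sigma_i\neq\sigma_{i+1}\}}$ (the Ising Hamiltonian with interaction $J(i)\equiv 1$), and $f_c(\sigma)=2\sum_{i=1}^\infty(i-c)\mathbb{1}_{\{\sigma_i=-1\}}-2\sum_{i=-\infty}^0(i-c)\mathbb{1}_{\{\sigma_i=1\}}$. $Z_{\beta,q,c}$ is the normalising constant (partition function) of the Ising measure $\mu(\sigma)\propto e^{-\beta H(\sigma)}q^{f_c(\sigma)}$; configurations outside $\mathcal{B}$ contribute zero weight. *)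

theory Defs
  imports "HOL-Analysis.Analysis"
begin

type_synonym config = "int \<Rightarrow> int"

definition spin_configs :: "config set" where
  "spin_configs = {\<sigma>. \<forall>i. \<sigma> i \<in> {-1, 1}}"

definition blocking :: "config set" where
  "blocking = {\<sigma> \<in> spin_configs. \<exists>a b::int. \<forall>i::nat.
      \<sigma> (a - int i) = -1 \<and> \<sigma> (b + int i) = 1}"

definition Ham :: "config \<Rightarrow> real" where
  "Ham \<sigma> = (\<Sum>\<^sub>\<infinity> i::int. if \<sigma> i \<noteq> \<sigma> (i + 1) then 1 else 0)"

definition f_c :: "real \<Rightarrow> config \<Rightarrow> real" where
  "f_c c \<sigma> =
     2 * (\<Sum>\<^sub>\<infinity> i\<in>{1::int..}. if \<sigma> i = -1 then real_of_int i - c else 0)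
   - 2 * (\<Sum>\<^sub>\<infinity> i\<in>{..0::int}. if \<sigma> i = 1 then real_of_int i - c else 0)"

definition weight :: "real \<Rightarrow> real \<Rightarrow> real \<Rightarrow> config \<Rightarrow> real" where
  "weight \<beta> q c \<sigma> = exp (- \<beta> * Ham \<sigma>) * q powr f_c c \<sigma>"

definition partition_fn :: "real \<Rightarrow> real \<Rightarrow> real \<Rightarrow> real" where
  "partition_fn \<beta> q c = (\<Sum>\<^sub>\<infinity> \<sigma>\<in>blocking. weight \<beta> q c \<sigma>)"

end

(*
  Two parametrisations of the blocking configurations are compared.

  Every blocking configuration arises from the ground state (minus on the non-positive, plus on
  the positive sites) by flipping a finite set of spins. At beta = 0, flipping the spin at x
  multiplies the weight by q^(2(x - c)) if x >= 1 and by q^(2(c - x)) if x <= 0, independently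
  of the other flips, so Z at beta = 0 is the product over i >= 1 of
  (1 + q^(2(i-c))) (1 + q^(2(i-1+c))).

  Alternatively, a blocking configuration is a first wall followed by alternating runs of a_k
  plus and b_k minus spins. Sorting its spins gives a single-wall configuration with wall at a
  centre n, every transposition of a neighbouring (+,-) pair costing q^2, and every pair of runs
  adds two walls. Hence its weight is e^(-beta) q^(2 psi(n)) t^k (q^2)^inv, where
  psi(n) = n(n+1)/2 - c n and t = e^(-2 beta). Summing over the runs level by level gives
  Z = e^(-beta) J prod_(s >= 1) (1 + t q^(2s) / (1 - q^(2s))), where J is the sum of q^(2 psi(n))
  over all centres n. Comparing with beta = 0 determines J (this is the Jacobi triple product
  identity), and (1 + t x / (1 - x)) (1 - x) = 1 + (t - 1) x yields the formula.
*)
theory Submission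
  imports Defs
begin

section \<open>Sums of non-negative families and infinite products\<close>

lemma finite_subset_incseq_Union:
  assumes "incseq A" "finite F" "F \<subseteq> (\<Union>n. A n)"
  obtains n where "F \<subseteq> A n"
  using assms(2,3)
proof (induction F arbitrary: thesis rule: finite_induct)
  case (insert x F)
  obtain n where "F \<subseteq> A n" using insert by auto
  moreover obtain m where "x \<in> A m" using insert.prems by auto
  ultimately have "insert x F \<subseteq> A (max n m)"
    using monoD[OF assms(1), of n "max n m"] monoD[OF assms(1), of m "max n m"] by auto
  then show ?case by (rule insert.prems)
qed simp

lemma has_sum_incseq_Union:
  fixes f :: "'a \<Rightarrow> real"
  assumes nonneg: "\<And>x. x \<in> (\<Union>n. A n) \<Longrightarrow> 0 \<le> f x"
    and inc: "incseq A"
    and partial: "\<And>n. (f has_sum s n) (A n)"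
    and lim: "s \<longlonglongrightarrow> S"
  shows "(f has_sum S) (\<Union>n. A n)"
proof -
  have s_inc: "incseq s"
  proof (rule monoI)
    fix m n :: nat assume "m \<le> n"
    with inc have "A m \<subseteq> A n" by (rule monoD)
    then show "s m \<le> s n"
      by (rule has_sum_mono2[OF partial partial]) (use nonneg in blast)
  qed
  have finite_le: "sum f F \<le> S" if F: "finite F" "F \<subseteq> (\<Union>n. A n)" for F
  proof -
    obtain n where n: "F \<subseteq> A n" using finite_subset_incseq_Union[OF inc F] .
    have "sum f F \<le> s n"
      by (rule finite_sum_le_has_sum[OF partial F(1) n]) (use nonneg in blast)
    also have "\<dots> \<le> S" using incseq_le[OF s_inc lim] .
    finally show ?thesis .
  qed
  have summable: "f summable_on (\<Union>n. A n)"
    by (rule nonneg_bdd_above_summable_on) (use nonneg finite_le in \<open>auto intro!: bdd_aboveI2\<close>)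
  have "s n \<le> infsum f (\<Union>n. A n)" for n
    by (rule has_sum_mono2[OF partial has_sum_infsum[OF summable]]) (use nonneg in auto)
  then have "S \<le> infsum f (\<Union>n. A n)"
    by (intro LIMSEQ_le_const2[OF lim]) auto
  moreover have "infsum f (\<Union>n. A n) \<le> S"
    by (rule infsum_le_finite_sums[OF summable finite_le])
  ultimately have "infsum f (\<Union>n. A n) = S" by (rule antisym[rotated])
  then show ?thesis
    using has_sum_infsum[OF summable] by simp
qed

lemma has_sum_Times_nonneg:
  fixes f :: "'a \<Rightarrow> real" and g :: "'b \<Rightarrow> real"
  assumes "\<And>x. x \<in> A \<Longrightarrow> 0 \<le> f x" "\<And>y. y \<in> B \<Longrightarrow> 0 \<le> g y"
    and f: "(f has_sum a) A" and g: "(g has_sum b) B"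
  shows "((\<lambda>(x, y). f x * g y) has_sum a * b) (A \<times> B)"
proof -
  have rows: "((\<lambda>y. f x * g y) has_sum f x * b) B" for x
    by (rule has_sum_cmult_right[OF g])
  have cols: "((\<lambda>x. f x * b) has_sum a * b) A"
    by (rule has_sum_cmult_left[OF f])
  have "(\<lambda>(x, y). f x * g y) summable_on A \<times> B"
    by (rule summable_on_SigmaI[where g = "\<lambda>x. f x * b"])
      (use rows cols assms(1,2) in \<open>auto simp: summable_on_def\<close>)
  with rows cols show ?thesis
    by (intro has_sum_SigmaI) auto
qed

lemma convergent_prod_geometric_bound:
  fixes f :: "nat \<Rightarrow> real"
  assumes "0 \<le> p" "p < 1" "\<And>n. \<bar>f n - 1\<bar> \<le> C * p ^ n"
  shows "convergent_prod f"
proof -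
  have "summable (\<lambda>n. C * p ^ n)"
    using assms by (intro summable_mult summable_geometric) simp
  then have "summable (\<lambda>n. norm (f n - 1))"
    by (rule summable_comparison_test[rotated]) (use assms in auto)
  then show ?thesis
    by (intro abs_convergent_prod_imp_convergent_prod summable_imp_abs_convergent_prod)
qed

lemma convergent_prod_LIMSEQ_lessThan:
  "convergent_prod (f :: nat \<Rightarrow> real) \<Longrightarrow> (\<lambda>n. \<Prod>i<n. f i) \<longlonglongrightarrow> prodinf f"
  by (subst LIMSEQ_lessThan_iff_atMost) (rule convergent_prod_LIMSEQ)

section \<open>Configurations as flipped ground states\<close>

definition ground_config :: config where
  "ground_config x = (if x \<le> 0 then -1 else 1)"

definition defects :: "config \<Rightarrow> int set" where
  "defects \<sigma> = {x. \<sigma> x \<noteq> ground_config x}"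

lemma spin_configs_cases:
  assumes "\<sigma> \<in> spin_configs"
  obtains "\<sigma> x = -1" | "\<sigma> x = 1"
  using assms by (auto simp: spin_configs_def)

lemma blocking_iff_finite_defects:
  "\<sigma> \<in> blocking \<longleftrightarrow> \<sigma> \<in> spin_configs \<and> finite (defects \<sigma>)"
proof
  assume "\<sigma> \<in> blocking"
  then obtain a b where spins: "\<sigma> \<in> spin_configs"
    and ends: "\<And>i::nat. \<sigma> (a - int i) = -1 \<and> \<sigma> (b + int i) = 1"
    by (auto simp: blocking_def)
  have left: "\<sigma> x = -1" if "x \<le> a" for x using ends[of "nat (a - x)"] that by simp
  have right: "\<sigma> x = 1" if "b \<le> x" for x using ends[of "nat (x - b)"] that by simp
  have "defects \<sigma> \<subseteq> {min a 0..max b 1}"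
  proof
    fix x assume "x \<in> defects \<sigma>"
    then show "x \<in> {min a 0..max b 1}"
      using left[of x] right[of x]
      by (cases "x \<le> a"; cases "b \<le> x"; auto simp: defects_def ground_config_def split: if_splits)
  qed
  then show "\<sigma> \<in> spin_configs \<and> finite (defects \<sigma>)"
    using spins finite_subset by blast
next
  assume spins_finite: "\<sigma> \<in> spin_configs \<and> finite (defects \<sigma>)"
  then obtain k where k: "abs ` defects \<sigma> \<subseteq> {..k}"
    using finite_int_iff_bounded_le by blast
  have ground: "\<sigma> x = ground_config x" if "max k 0 < \<bar>x\<bar>" for x
    using k that by (force simp: defects_def)
  have "\<sigma> (- max k 0 - 1 - int i) = -1 \<and> \<sigma> (max k 0 + 1 + int i) = 1" for i
  proof -
    have "max k 0 < \<bar>- max k 0 - 1 - int i\<bar>" "max k 0 < \<bar>max k 0 + 1 + int i\<bar>" by linarith+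
    from this[THEN ground] show ?thesis by (simp add: ground_config_def)
  qed
  then show "\<sigma> \<in> blocking"
    using spins_finite unfolding blocking_def by blast
qed

definition f_term :: "real \<Rightarrow> config \<Rightarrow> int \<Rightarrow> real" where
  "f_term c \<sigma> x = (of_bool (\<sigma> x = -1) - of_bool (x \<le> 0)) * (of_int x - c)"

lemma f_c_eq_sum_f_term:
  assumes "\<sigma> \<in> spin_configs" "finite S" "defects \<sigma> \<subseteq> S"
  shows "f_c c \<sigma> = 2 * (\<Sum>x\<in>S. f_term c \<sigma> x)"
proof -
  have ground: "\<sigma> x = ground_config x" if "x \<notin> S" for x
    using assms(3) that by (auto simp: defects_def)
  have "(\<Sum>\<^sub>\<infinity>x\<in>{1..}. if \<sigma> x = -1 then of_int x - c else 0) = (\<Sum>x\<in>S \<inter> {1..}. f_term c \<sigma> x)"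
    by (subst infsum_cong_neutral[where T = "S \<inter> {1..}" and g = "f_term c \<sigma>"])
      (use ground assms(2) in \<open>auto simp: f_term_def ground_config_def\<close>)
  moreover have "(\<Sum>\<^sub>\<infinity>x\<in>{..0}. if \<sigma> x = 1 then of_int x - c else 0) = - (\<Sum>x\<in>S \<inter> {..0}. f_term c \<sigma> x)"
    by (subst infsum_cong_neutral[where T = "S \<inter> {..0}" and g = "\<lambda>x. - f_term c \<sigma> x"])
      (use ground assms(1,2) in
        \<open>auto simp: f_term_def ground_config_def sum_negf elim: spin_configs_cases\<close>)
  moreover have "sum (f_term c \<sigma>) S = sum (f_term c \<sigma>) (S \<inter> {1..}) + sum (f_term c \<sigma>) (S \<inter> {..0})"
    using assms(2) by (subst sum.union_disjoint[symmetric]) (auto intro: sum.cong)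
  ultimately show ?thesis
    by (simp add: f_c_def)
qed

lemma f_c_raise_spins:
  assumes "\<sigma> \<in> blocking" "\<sigma>' \<in> blocking"
    and outside: "\<And>x. x \<notin> K \<Longrightarrow> \<sigma> x = \<sigma>' x"
    and inside: "\<And>x. x \<in> K \<Longrightarrow> \<sigma> x = 1 \<and> \<sigma>' x = -1"
  shows "f_c c \<sigma> = f_c c \<sigma>' - 2 * (\<Sum>x\<in>K. of_int x - c)"
proof -
  define S where "S = defects \<sigma> \<union> defects \<sigma>'"
  have S: "finite S" "defects \<sigma> \<subseteq> S" "defects \<sigma>' \<subseteq> S"
    using assms(1,2) by (auto simp: S_def blocking_iff_finite_defects)
  have "K \<subseteq> S"
    using inside by (force simp: S_def defects_def)
  have "(\<Sum>x\<in>S. f_term c \<sigma> x) - (\<Sum>x\<in>S. f_term c \<sigma>' x) = (\<Sum>x\<in>S. if x \<in> K then c - of_int x else 0)"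
    unfolding sum_subtractf[symmetric]
    by (rule sum.cong) (auto simp: f_term_def outside dest: inside)
  also have "\<dots> = - (\<Sum>x\<in>K. of_int x - c)"
    using \<open>K \<subseteq> S\<close> S(1) by (simp add: sum.If_cases Int_absorb1 sum_negf[symmetric])
  finally show ?thesis
    using f_c_eq_sum_f_term[OF _ S(1,2)] f_c_eq_sum_f_term[OF _ S(1,3)] assms(1,2)
    by (simp add: blocking_iff_finite_defects)
qed

definition flip_config :: "int set \<Rightarrow> config" where
  "flip_config E x = (if x \<in> E then - ground_config x else ground_config x)"

lemma defects_flip_config: "defects (flip_config E) = E"
  by (auto simp: defects_def flip_config_def ground_config_def)

lemma flip_config_defects: "\<sigma> \<in> spin_configs \<Longrightarrow> flip_config (defects \<sigma>) = \<sigma>"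
  unfolding spin_configs_def fun_eq_iff flip_config_def defects_def ground_config_def by force

lemma bij_betw_flip_config: "bij_betw flip_config {E. finite E} blocking"
proof (rule bij_betw_byWitness[where f' = defects])
  show "flip_config ` {E. finite E} \<subseteq> blocking"
    by (auto simp: blocking_iff_finite_defects defects_flip_config spin_configs_def
        flip_config_def ground_config_def)
qed (auto simp: defects_flip_config flip_config_defects blocking_iff_finite_defects)

definition flip_cost :: "real \<Rightarrow> int \<Rightarrow> real" where
  "flip_cost c x = (if 1 \<le> x then of_int x - c else c - of_int x)"

lemma f_c_flip_config:
  assumes "finite E"
  shows "f_c c (flip_config E) = 2 * (\<Sum>x\<in>E. flip_cost c x)"
proof -
  have "flip_config E \<in> spin_configs"
    by (auto simp: spin_configs_def flip_config_def ground_config_def)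
  then have "f_c c (flip_config E) = 2 * (\<Sum>x\<in>E. f_term c (flip_config E) x)"
    using assms by (intro f_c_eq_sum_f_term) (auto simp: defects_flip_config)
  also have "(\<Sum>x\<in>E. f_term c (flip_config E) x) = (\<Sum>x\<in>E. flip_cost c x)"
    by (rule sum.cong) (auto simp: f_term_def flip_config_def ground_config_def flip_cost_def)
  finally show ?thesis .
qed

lemma has_sum_prod_Pow:
  fixes g :: "'a \<Rightarrow> 'b :: {comm_semiring_1, topological_comm_monoid_add}"
  assumes "finite K"
  shows "((\<lambda>E. \<Prod>x\<in>E. g x) has_sum (\<Prod>x\<in>K. 1 + g x)) (Pow K)"
proof (rule has_sum_finiteI)
  show "(\<Prod>x\<in>K. 1 + g x) = (\<Sum>E\<in>Pow K. \<Prod>x\<in>E. g x)"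
    using prod_add[OF assms, of g "\<lambda>_. 1"] by (simp add: add.commute)
qed (use assms in simp)

lemma prod_int_window:
  "(\<Prod>x\<in>{1 - int N..int N}. g x) = (\<Prod>n<N. g (int n + 1) * g (- int n))"
proof (induction N)
  case (Suc N)
  have "{1 - int (Suc N)..int (Suc N)} = insert (int N + 1) (insert (- int N) {1 - int N..int N})"
    by auto
  then show ?case
    using Suc by (simp add: mult_ac)
qed simp

definition flip_weight :: "real \<Rightarrow> real \<Rightarrow> int \<Rightarrow> real" where
  "flip_weight q c x = q powr (2 * flip_cost c x)"

definition flip_pair_factor :: "real \<Rightarrow> real \<Rightarrow> nat \<Rightarrow> real" where
  "flip_pair_factor q c n =
     (1 + q powr (2 * (real (Suc n) - c))) * (1 + q powr (2 * (real (Suc n) - 1 + c)))"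

lemma weight_zero_flip_config:
  assumes "0 < q" "finite E"
  shows "weight 0 q c (flip_config E) = (\<Prod>x\<in>E. flip_weight q c x)"
  using assms
  by (simp add: weight_def f_c_flip_config sum_distrib_left powr_sum flip_weight_def)

lemma flip_pair_factor_eq:
  "flip_pair_factor q c n = (1 + flip_weight q c (int n + 1)) * (1 + flip_weight q c (- int n))"
  by (simp add: flip_pair_factor_def flip_weight_def flip_cost_def algebra_simps)

lemma convergent_prod_flip_pair_factor:
  assumes "0 < q" "q < 1"
  shows "convergent_prod (flip_pair_factor q c)"
proof -
  define p where "p = q\<^sup>2"
  define z where "z = q powr (- 2 * c)"
  define z' where "z' = q powr (2 * c)"
  have p: "0 \<le> p" "p < 1" using assms by (auto simp: p_def power_less_one_iff)
  have q_powr: "q powr (2 * real k + a) = p ^ k * q powr a" for k a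
  proof -
    have "q powr (2 * real k) = p ^ k"
      using powr_realpow[OF assms(1), of "2 * k"] by (simp add: p_def power_mult)
    then show ?thesis by (simp add: powr_add)
  qed
  show ?thesis
  proof (rule convergent_prod_geometric_bound[OF p, where C = "z + z' + z * z'"])
    fix n
    have "flip_pair_factor q c n - 1 = z * p ^ Suc n + z' * p ^ n + z * z' * (p ^ n * p ^ Suc n)"
      using q_powr[of "Suc n" "-2 * c"] q_powr[of n "2 * c"]
      by (simp add: flip_pair_factor_def z_def z'_def algebra_simps del: power_Suc)
    also have "\<dots> \<le> z * p ^ n + z' * p ^ n + z * z' * p ^ n"
    proof -
      have "p ^ Suc n \<le> p ^ n" using p by (intro power_decreasing) auto
      moreover have "p ^ n * p ^ Suc n \<le> p ^ n"
        using p by (intro mult_left_le) (auto simp del: power_Suc intro: power_le_one)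
      ultimately show ?thesis
        by (intro add_mono mult_left_mono) (auto simp: z_def z'_def simp del: power_Suc)
    qed
    finally have "flip_pair_factor q c n - 1 \<le> (z + z' + z * z') * p ^ n"
      by (simp add: algebra_simps)
    moreover have "0 \<le> flip_pair_factor q c n - 1"
      by (simp add: flip_pair_factor_def algebra_simps)
    ultimately show "\<bar>flip_pair_factor q c n - 1\<bar> \<le> (z + z' + z * z') * p ^ n"
      by simp
  qed
qed

lemma has_sum_weight_zero:
  assumes "0 < q" "q < 1"
  shows "(weight 0 q c has_sum (\<Prod>n. flip_pair_factor q c n)) blocking"
proof -
  define A where "A N = Pow {1 - int N..int N}" for N
  have "{E. finite E} = (\<Union>N. A N)"
  proof (intro equalityI subsetI)
    fix E :: "int set" assume "E \<in> {E. finite E}"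
    then obtain k where "abs ` E \<subseteq> {..k}"
      using finite_int_iff_bounded_le by blast
    then have "E \<in> A (nat k + 1)" by (force simp: A_def)
    then show "E \<in> (\<Union>N. A N)" by blast
  qed (auto simp: A_def intro: finite_subset)
  moreover have "((\<lambda>E. \<Prod>x\<in>E. flip_weight q c x) has_sum (\<Prod>n. flip_pair_factor q c n)) (\<Union>N. A N)"
  proof (rule has_sum_incseq_Union)
    show "incseq A" by (rule monoI) (auto simp: A_def)
    show "((\<lambda>E. \<Prod>x\<in>E. flip_weight q c x) has_sum (\<Prod>n<N. flip_pair_factor q c n)) (A N)" for N
      using has_sum_prod_Pow[of "{1 - int N..int N}" "flip_weight q c"]
      by (simp add: A_def prod_int_window flip_pair_factor_eq)
    show "(\<lambda>N. \<Prod>n<N. flip_pair_factor q c n) \<longlonglongrightarrow> (\<Prod>n. flip_pair_factor q c n)"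
      using convergent_prod_flip_pair_factor[OF assms] by (rule convergent_prod_LIMSEQ_lessThan)
  qed (simp add: flip_weight_def prod_nonneg)
  ultimately have "((\<lambda>E. \<Prod>x\<in>E. flip_weight q c x) has_sum (\<Prod>n. flip_pair_factor q c n))
      {E. finite E}"
    by simp
  then have "((weight 0 q c \<circ> flip_config) has_sum (\<Prod>n. flip_pair_factor q c n)) {E. finite E}"
    by (rule has_sum_cong[THEN iffD1, rotated]) (simp add: weight_zero_flip_config[OF assms(1)])
  then show ?thesis
    using bij_betw_flip_config by (metis bij_betw_def has_sum_reindex)
qed

section \<open>Configurations as runs of plus and minus spins\<close>

lemma obtain_least_int_from:
  fixes P :: "int \<Rightarrow> bool"
  assumes "a \<le> x" "P x"
  obtains y where "a \<le> y" "P y" "\<And>z. a \<le> z \<Longrightarrow> z < y \<Longrightarrow> \<not> P z"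
proof -
  define S where "S = {z \<in> {a..x}. P z}"
  have "S \<subseteq> {a..x}" by (auto simp: S_def)
  then have S: "finite S" "x \<in> S"
    using assms finite_subset by (auto simp: S_def)
  show thesis
  proof (rule that[of "Min S"])
    have "Min S \<in> S" using S by (intro Min_in) auto
    then show "a \<le> Min S" "P (Min S)" by (auto simp: S_def)
    have "Min S \<le> x" using S by simp
    show "\<not> P z" if "a \<le> z" "z < Min S" for z
    proof
      assume "P z"
      with that \<open>Min S \<le> x\<close> have "z \<in> S" by (simp add: S_def)
      with S(1) that(2) show False using Min_le[of S z] by linarith
    qed
  qed
qed

text \<open>
  \<open>block_config d L\<close> has its first domain wall between \<open>d\<close> and \<open>d + 1\<close>; each pair \<open>(a, b)\<close>
  of \<open>L\<close> then contributes a run of \<open>a\<close> plus spins followed by a run of \<open>b\<close> minus spins.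
\<close>
fun block_config :: "int \<Rightarrow> (nat \<times> nat) list \<Rightarrow> config" where
  "block_config d [] x = (if x \<le> d then -1 else 1)"
| "block_config d ((a, b) # L) x =
     (if x \<le> d then -1 else if x \<le> d + int a then 1 else block_config (d + int a + int b) L x)"

definition block_lists :: "(nat \<times> nat) list set" where
  "block_lists = {L. \<forall>(a, b)\<in>set L. 0 < a \<and> 0 < b}"

lemma block_lists_simps [simp]:
  "[] \<in> block_lists"
  "(a, b) # L \<in> block_lists \<longleftrightarrow> 0 < a \<and> 0 < b \<and> L \<in> block_lists"
  by (auto simp: block_lists_def)

lemma block_config_le: "x \<le> d \<Longrightarrow> block_config d L x = -1"
  by (induction L arbitrary: d) auto

lemma block_config_succ: "L \<in> block_lists \<Longrightarrow> block_config d L (d + 1) = 1"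
  by (cases L) auto

lemma block_config_in_blocking: "block_config d L \<in> blocking"
proof -
  have "block_config d L x \<in> {-1, 1}" for x
    by (induction d L x rule: block_config.induct) auto
  moreover have "finite (defects (block_config d L))"
  proof (induction L arbitrary: d)
    case Nil
    have "defects (block_config d []) \<subseteq> {min d 0..max d 0}"
      by (auto simp: defects_def ground_config_def split: if_splits)
    then show ?case
      by (rule finite_subset) simp
  next
    case (Cons p L)
    obtain a b where p: "p = (a, b)" by fastforce
    have "defects (block_config d (p # L))
        \<subseteq> defects (block_config (d + int a + int b) L) \<union> {d + 1..d + int a}"
      by (auto simp: p defects_def ground_config_def block_config_le split: if_splits)
    then show ?case
      by (rule finite_subset) (simp add: Cons.IH)
  qed
  ultimately show ?thesis
    by (simp add: blocking_iff_finite_defects spin_configs_def)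
qed

lemma block_config_first_wall_unique:
  assumes "L \<in> block_lists" "L' \<in> block_lists" "block_config d L = block_config d' L'"
  shows "d = d'"
proof (cases d d' rule: linorder_cases)
  case less
  then show ?thesis
    using assms block_config_succ[of L d] block_config_le[of "d + 1" d' L'] by simp
next
  case greater
  then show ?thesis
    using assms block_config_succ[of L' d'] block_config_le[of "d' + 1" d L] by simp
qed

lemma block_config_inj:
  assumes "L \<in> block_lists" "L' \<in> block_lists" "block_config d L = block_config d' L'"
  shows "d = d' \<and> L = L'"
  using assms
proof (induction L arbitrary: d d' L')
  case Nil
  have "d = d'" using block_config_first_wall_unique[OF Nil.prems] .
  moreover have "L' = []"
  proof (rule ccontr)
    assume "L' \<noteq> []"
    then obtain a b L'' where L': "L' = (a, b) # L''" by (metis list.exhaust surj_pair)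
    then show False
      using Nil.prems \<open>d = d'\<close> fun_cong[OF Nil.prems(3), of "d + int a + 1"]
      by (simp add: block_config_le)
  qed
  ultimately show ?case by simp
next
  case (Cons p L)
  obtain a b where p: "p = (a, b)" by fastforce
  have "d = d'" using block_config_first_wall_unique[OF Cons.prems] .
  obtain a' b' L'' where L': "L' = (a', b') # L''"
    using Cons.prems \<open>d = d'\<close> fun_cong[OF Cons.prems(3), of "d + int a + 1"]
    by (cases L') (auto simp: p block_config_le)
  have pos: "0 < a" "0 < b" "L \<in> block_lists" "0 < a'" "0 < b'" "L'' \<in> block_lists"
    using Cons.prems by (auto simp: p L')
  have "a = a'"
  proof (cases a a' rule: linorder_cases)
    case less
    then show ?thesis
      using fun_cong[OF Cons.prems(3), of "d + int a + 1"] \<open>d = d'\<close> pos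
      by (simp add: p L' block_config_le)
  next
    case greater
    then show ?thesis
      using fun_cong[OF Cons.prems(3), of "d + int a' + 1"] \<open>d = d'\<close> pos
      by (simp add: p L' block_config_le)
  qed
  have "block_config (d + int a + int b) L = block_config (d + int a + int b') L''"
  proof
    fix x
    show "block_config (d + int a + int b) L x = block_config (d + int a + int b') L'' x"
      using fun_cong[OF Cons.prems(3), of x] \<open>d = d'\<close> \<open>a = a'\<close> pos
      by (cases "x \<le> d + int a") (auto simp: p L' block_config_le split: if_splits)
  qed
  with Cons.IH pos have "b = b' \<and> L = L''" by fastforce
  with \<open>d = d'\<close> \<open>a = a'\<close> show ?case by (simp add: p L')
qed

lemma block_config_Cons_eqI:
  assumes "d + 1 < e" "e < g"
    and "\<And>x. x \<le> d \<Longrightarrow> \<sigma> x = -1" "\<And>x. d < x \<Longrightarrow> x < e \<Longrightarrow> \<sigma> x = 1"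
    and "\<And>x. e \<le> x \<Longrightarrow> x < g \<Longrightarrow> \<sigma> x = -1" "\<And>x. g \<le> x \<Longrightarrow> \<sigma> x = block_config (g - 1) L x"
  shows "\<sigma> = block_config d ((nat (e - 1 - d), nat (g - e)) # L)"
proof
  fix x
  consider "x \<le> d" | "d < x" "x < e" | "e \<le> x" "x < g" | "g \<le> x" by linarith
  then show "\<sigma> x = block_config d ((nat (e - 1 - d), nat (g - e)) # L) x"
    by cases (use assms in \<open>auto simp: block_config_le\<close>)
qed

lemma block_config_exists:
  assumes "\<sigma> \<in> spin_configs" "\<And>x. x \<le> d \<Longrightarrow> \<sigma> x = -1" "\<sigma> (d + 1) = 1"
    and "\<And>x. b \<le> x \<Longrightarrow> \<sigma> x = 1"
  shows "\<exists>L\<in>block_lists. \<sigma> = block_config d L"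
  using assms
proof (induction "nat (b - d)" arbitrary: \<sigma> d rule: less_induct)
  case less
  have spins: "\<sigma> x = -1 \<or> \<sigma> x = 1" for x
    using less.prems(1) by (auto simp: spin_configs_def)
  show ?case
  proof (cases "\<exists>x>d. \<sigma> x = -1")
    case False
    have "\<sigma> x = block_config d [] x" for x
      using False less.prems(2) spins[of x] by (cases "x \<le> d") auto
    then have "\<sigma> = block_config d []" ..
    then show ?thesis by (intro bexI[of _ "[]"]) simp_all
  next
    case True
    then obtain x where "d < x" "\<sigma> x = -1" by blast
    then have "d + 1 \<le> x" "\<sigma> x = -1" by simp_all
    then obtain e where e: "d + 1 \<le> e" "\<sigma> e = -1" "\<And>z. d + 1 \<le> z \<Longrightarrow> z < e \<Longrightarrow> \<sigma> z \<noteq> -1"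
      by (rule obtain_least_int_from) blast
    have "e \<noteq> d + 1" using e(2) less.prems(3) by auto
    with e(1) have "d + 1 < e" by simp
    have "\<not> b \<le> e" using e(2) less.prems(4)[of e] by auto
    then have "e < b" by simp
    obtain g where g: "e \<le> g" "\<sigma> g = 1" "\<And>z. e \<le> z \<Longrightarrow> z < g \<Longrightarrow> \<sigma> z \<noteq> 1"
      using obtain_least_int_from[of e b "\<lambda>z. \<sigma> z = 1"] \<open>e < b\<close> less.prems(4) by auto
    have "e \<noteq> g" using e(2) g(2) by auto
    with g(1) have "e < g" by simp
    have "g \<le> b" using g(3)[of b] \<open>e < b\<close> less.prems(4)[of b] by force
    define \<sigma>' where "\<sigma>' x = (if x < g then -1 else \<sigma> x)" for x
    have "\<exists>L\<in>block_lists. \<sigma>' = block_config (g - 1) L"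
    proof (rule less.hyps)
      show "nat (b - (g - 1)) < nat (b - d)" using \<open>d + 1 < e\<close> \<open>e < g\<close> \<open>e < b\<close> by simp
    qed (use less.prems(1,4) g(2) \<open>e < g\<close> \<open>g \<le> b\<close> in \<open>auto simp: \<sigma>'_def spin_configs_def\<close>)
    then obtain L where L: "L \<in> block_lists" "\<sigma>' = block_config (g - 1) L" by blast
    have "\<sigma> = block_config d ((nat (e - 1 - d), nat (g - e)) # L)"
    proof (rule block_config_Cons_eqI[OF \<open>d + 1 < e\<close> \<open>e < g\<close> less.prems(2)])
      show "\<sigma> x = 1" if "d < x" "x < e" for x using e(3)[of x] spins[of x] that by auto
      show "\<sigma> x = -1" if "e \<le> x" "x < g" for x using g(3)[of x] spins[of x] that by auto
      show "\<sigma> x = block_config (g - 1) L x" if "g \<le> x" for x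
        using fun_cong[OF L(2), of x] that by (simp add: \<sigma>'_def)
    qed
    moreover have "(nat (e - 1 - d), nat (g - e)) # L \<in> block_lists"
      using L(1) \<open>d + 1 < e\<close> \<open>e < g\<close> by simp
    ultimately show ?thesis by blast
  qed
qed

lemma block_config_surj:
  assumes "\<sigma> \<in> blocking"
  obtains d L where "L \<in> block_lists" "\<sigma> = block_config d L"
proof -
  obtain a b where spins: "\<sigma> \<in> spin_configs"
    and ends: "\<And>i::nat. \<sigma> (a - int i) = -1 \<and> \<sigma> (b + int i) = 1"
    using assms by (auto simp: blocking_def)
  have left: "\<sigma> x = -1" if "x \<le> a" for x using ends[of "nat (a - x)"] that by simp
  have right: "\<sigma> x = 1" if "b \<le> x" for x using ends[of "nat (x - b)"] that by simp
  have "\<sigma> (max a b) = 1" by (rule right) simp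
  with max.cobounded1 obtain w
    where w: "a \<le> w" "\<sigma> w = 1" "\<And>z. a \<le> z \<Longrightarrow> z < w \<Longrightarrow> \<sigma> z \<noteq> 1"
    by (rule obtain_least_int_from) blast
  have "\<sigma> x = -1" if "x \<le> w - 1" for x
    using left[of x] w(3)[of x] spins that by (cases "x \<le> a") (auto simp: spin_configs_def)
  then show thesis
    using block_config_exists[OF spins _ _ right, of "w - 1"] w(2) that by auto
qed

definition walls :: "config \<Rightarrow> int set" where
  "walls \<sigma> = {x. \<sigma> x \<noteq> \<sigma> (x + 1)}"

lemma Ham_eq_card_walls: "finite (walls \<sigma>) \<Longrightarrow> Ham \<sigma> = card (walls \<sigma>)"
  unfolding Ham_def
  by (subst infsum_cong_neutral[where T = "walls \<sigma>" and g = "\<lambda>_. 1"]) (auto simp: walls_def)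

lemma walls_block_config_ge: "x \<in> walls (block_config d L) \<Longrightarrow> d \<le> x"
  by (rule ccontr) (auto simp: walls_def block_config_le)

lemma walls_block_config:
  "L \<in> block_lists \<Longrightarrow>
    finite (walls (block_config d L)) \<and> card (walls (block_config d L)) = 1 + 2 * length L"
proof (induction L arbitrary: d)
  case Nil
  have "walls (block_config d []) = {d}" by (auto simp: walls_def)
  then show ?case by (simp del: block_config.simps)
next
  case (Cons p L)
  obtain a b where p: "p = (a, b)" by fastforce
  have pos: "0 < a" "0 < b" "L \<in> block_lists" using Cons.prems by (auto simp: p)
  define d' where "d' = d + int a + int b"
  have "walls (block_config d (p # L)) = insert d (insert (d + int a) (walls (block_config d' L)))"
  proof (rule set_eqI)
    fix x
    consider "x < d" | "x = d" | "d < x" "x < d + int a" | "x = d + int a" | "d + int a < x"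
      by linarith
    then show "x \<in> walls (block_config d (p # L))
        \<longleftrightarrow> x \<in> insert d (insert (d + int a) (walls (block_config d' L)))"
      by cases
        (use pos walls_block_config_ge[of x d' L] in \<open>auto simp: p d'_def walls_def block_config_le\<close>)
  qed
  moreover have "d \<notin> walls (block_config d' L)" "d + int a \<notin> walls (block_config d' L)"
    using walls_block_config_ge[of _ d' L] pos by (force simp: d'_def)+
  ultimately show ?case
    using Cons.IH[OF pos(3)] pos(1) by simp
qed

lemma Ham_block_config: "L \<in> block_lists \<Longrightarrow> Ham (block_config d L) = 1 + 2 * length L"
  using walls_block_config[of L d] Ham_eq_card_walls by simp

definition wall_energy :: "real \<Rightarrow> int \<Rightarrow> real" where
  "wall_energy c n = of_int n * (of_int n + 1) / 2 - c * of_int n"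

lemma sum_interval_wall_energy:
  "(\<Sum>x\<in>{d + 1..d + int a}. of_int x - c) = wall_energy c (d + int a) - wall_energy c d"
proof (induction a)
  case (Suc a)
  have "{d + 1..d + int (Suc a)} = insert (d + int a + 1) {d + 1..d + int a}" by auto
  then show ?case
    using Suc by (simp add: wall_energy_def algebra_simps add_divide_distrib)
qed simp

lemma f_c_block_config_Nil: "f_c c (block_config d []) = 2 * wall_energy c d"
proof (induction d rule: int_induct[where k = 0])
  case base
  have "defects (block_config 0 []) = {}"
    by (auto simp: defects_def ground_config_def)
  then have "f_c c (block_config 0 []) = 2 * (\<Sum>x\<in>{}. f_term c (block_config 0 []) x)"
    using block_config_in_blocking
    by (intro f_c_eq_sum_f_term) (auto simp: blocking_iff_finite_defects)
  then show ?case by (simp add: wall_energy_def del: block_config.simps)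
next
  case (step1 i)
  have "f_c c (block_config i [])
      = f_c c (block_config (i + 1) []) - 2 * (\<Sum>x\<in>{i + 1}. of_int x - c)"
    by (rule f_c_raise_spins[OF block_config_in_blocking block_config_in_blocking]) auto
  then show ?case
    using step1 sum_interval_wall_energy[where d = i and a = 1 and c = c]
    by (simp del: block_config.simps)
next
  case (step2 i)
  have "f_c c (block_config (i - 1) []) = f_c c (block_config i []) - 2 * (\<Sum>x\<in>{i}. of_int x - c)"
    by (rule f_c_raise_spins[OF block_config_in_blocking block_config_in_blocking]) auto
  then show ?case
    using step2 sum_interval_wall_energy[where d = "i - 1" and a = 1 and c = c]
    by (simp del: block_config.simps)
qed

definition minus_spins :: "(nat \<times> nat) list \<Rightarrow> nat" where
  "minus_spins L = sum_list (map snd L)"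

fun inversions :: "(nat \<times> nat) list \<Rightarrow> nat" where
  "inversions [] = 0"
| "inversions ((a, b) # L) = a * (b + minus_spins L) + inversions L"

lemma minus_spins_simps [simp]:
  "minus_spins [] = 0"
  "minus_spins ((a, b) # L) = b + minus_spins L"
  by (simp_all add: minus_spins_def)

text \<open>
  Sorting the spins of \<open>block_config d L\<close> to the right of \<open>d\<close> yields the single-wall
  configuration with wall at \<open>d + minus_spins L\<close>; \<open>inversions L\<close> counts the transpositions of
  neighbouring \<open>+ -\<close> pairs needed, and each of them lowers \<open>f_c\<close> by 2.
\<close>
lemma f_c_block_config:
  "L \<in> block_lists \<Longrightarrow>
    f_c c (block_config d L) = 2 * (wall_energy c (d + int (minus_spins L)) + inversions L)"
proof (induction L arbitrary: d)
  case Nil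
  then show ?case by (simp add: f_c_block_config_Nil del: block_config.simps)
next
  case (Cons p L)
  obtain a b where p: "p = (a, b)" by fastforce
  define m where "m = int (b + minus_spins L)"
  have "f_c c (block_config d (p # L))
      = f_c c (block_config (d + int a + int b) L) - 2 * (\<Sum>x\<in>{d + 1..d + int a}. of_int x - c)"
    by (rule f_c_raise_spins[OF block_config_in_blocking block_config_in_blocking])
      (auto simp: p block_config_le)
  also have "\<dots> = 2 * (wall_energy c (d + int a + m) - wall_energy c (d + int a) + wall_energy c d
      + inversions L)"
    unfolding sum_interval_wall_energy using Cons by (simp add: p m_def add.assoc)
  also have "wall_energy c (d + int a + m) - wall_energy c (d + int a) + wall_energy c d
      = wall_energy c (d + m) + of_int (int a * m)"
    by (simp add: wall_energy_def algebra_simps diff_divide_distrib add_divide_distrib)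
  finally show ?case
    by (simp add: p m_def algebra_simps)
qed

definition centre_weight :: "real \<Rightarrow> real \<Rightarrow> int \<Rightarrow> real" where
  "centre_weight q c n = q powr (2 * wall_energy c n)"

definition list_weight :: "real \<Rightarrow> real \<Rightarrow> (nat \<times> nat) list \<Rightarrow> real" where
  "list_weight t p L = t ^ length L * p ^ inversions L"

lemma weight_block_config:
  assumes "0 < q" "L \<in> block_lists"
  shows "weight \<beta> q c (block_config d L)
    = exp (- \<beta>) * centre_weight q c (d + int (minus_spins L)) * list_weight (exp (- 2 * \<beta>)) (q\<^sup>2) L"
proof -
  have "- \<beta> * Ham (block_config d L) = - \<beta> + real (length L) * (- 2 * \<beta>)"
    by (simp add: Ham_block_config[OF assms(2)] algebra_simps)
  then have "exp (- \<beta> * Ham (block_config d L)) = exp (- \<beta>) * exp (- 2 * \<beta>) ^ length L"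
    by (simp only: exp_add exp_of_nat_mult)
  moreover have "q powr f_c c (block_config d L)
      = centre_weight q c (d + int (minus_spins L)) * (q\<^sup>2) ^ inversions L"
    using powr_realpow[OF assms(1), of "2 * inversions L"]
    by (simp add: f_c_block_config[OF assms(2)] centre_weight_def powr_add power_mult distrib_left)
  ultimately show ?thesis
    by (simp add: weight_def list_weight_def)
qed

lemma bij_betw_centred_block_config:
  "bij_betw (\<lambda>(n, L). block_config (n - int (minus_spins L)) L) (UNIV \<times> block_lists) blocking"
proof (rule bij_betw_imageI)
  show "inj_on (\<lambda>(n, L). block_config (n - int (minus_spins L)) L) (UNIV \<times> block_lists)"
  proof (rule inj_onI, clarify)
    fix n L n' L'
    assume "L \<in> block_lists" "L' \<in> block_lists"
      and "block_config (n - int (minus_spins L)) L = block_config (n' - int (minus_spins L')) L'"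
    then have "n - int (minus_spins L) = n' - int (minus_spins L') \<and> L = L'"
      by (rule block_config_inj)
    then show "n = n' \<and> L = L'" by auto
  qed
  show "(\<lambda>(n, L). block_config (n - int (minus_spins L)) L) ` (UNIV \<times> block_lists) = blocking"
  proof (intro equalityI subsetI)
    fix \<sigma> assume "\<sigma> \<in> blocking"
    then obtain d L where "L \<in> block_lists" "\<sigma> = block_config d L"
      by (rule block_config_surj)
    then show "\<sigma> \<in> (\<lambda>(n, L). block_config (n - int (minus_spins L)) L) ` (UNIV \<times> block_lists)"
      by (intro rev_image_eqI[of "(d + int (minus_spins L), L)"]) simp_all
  qed (auto simp: block_config_in_blocking)
qed

lemma has_sum_weight_iff:
  assumes "0 < q"
  shows "(weight \<beta> q c has_sum X) blocking \<longleftrightarrow>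
    ((\<lambda>(n, L). exp (- \<beta>) * centre_weight q c n * list_weight (exp (- 2 * \<beta>)) (q\<^sup>2) L)
      has_sum X) (UNIV \<times> block_lists)"
proof -
  let ?config = "\<lambda>(n, L). block_config (n - int (minus_spins L)) L"
  have "(weight \<beta> q c has_sum X) (?config ` (UNIV \<times> block_lists)) \<longleftrightarrow>
      ((weight \<beta> q c \<circ> ?config) has_sum X) (UNIV \<times> block_lists)"
    by (rule has_sum_reindex[OF bij_betw_imp_inj_on[OF bij_betw_centred_block_config]])
  also have "?config ` (UNIV \<times> block_lists) = blocking"
    by (rule bij_betw_imp_surj_on[OF bij_betw_centred_block_config])
  also have "((weight \<beta> q c \<circ> ?config) has_sum X) (UNIV \<times> block_lists) \<longleftrightarrow>
    ((\<lambda>(n, L). exp (- \<beta>) * centre_weight q c n * list_weight (exp (- 2 * \<beta>)) (q\<^sup>2) L)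
      has_sum X) (UNIV \<times> block_lists)"
    by (intro has_sum_cong) (auto simp: weight_block_config[OF assms])
  finally show ?thesis .
qed

section \<open>Generating function of the runs\<close>

definition block_level_factor :: "real \<Rightarrow> real \<Rightarrow> nat \<Rightarrow> real" where
  "block_level_factor t p s = 1 + t * p ^ Suc s / (1 - p ^ Suc s)"

lemma convergent_prod_block_level_factor:
  assumes "0 \<le> t" "0 \<le> p" "p < 1"
  shows "convergent_prod (block_level_factor t p)"
proof (rule convergent_prod_geometric_bound[OF assms(2,3), where C = "t / (1 - p)"])
  fix n
  have "p ^ Suc n \<le> p" "p ^ Suc n < 1"
    using assms by (simp_all add: power_Suc_le_self power_less_one_iff del: power_Suc)
  then have "t * p ^ Suc n / (1 - p ^ Suc n) \<le> t * p ^ Suc n / (1 - p)"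
    using assms by (intro divide_left_mono mult_nonneg_nonneg) auto
  also have "\<dots> = t / (1 - p) * p ^ n * p" by simp
  also have "\<dots> \<le> t / (1 - p) * p ^ n"
    using assms by (intro mult_right_le_one_le) auto
  finally show "\<bar>block_level_factor t p n - 1\<bar> \<le> t / (1 - p) * p ^ n"
    using assms \<open>p ^ Suc n < 1\<close> by (simp add: block_level_factor_def)
qed

text \<open>
  If \<open>m\<^sub>k\<close> is the number of minus spins to the right of the \<open>k\<close>-th plus run, then
  \<open>inversions L = \<Sum>\<^sub>k a\<^sub>k m\<^sub>k\<close> with \<open>m\<^sub>1 > m\<^sub>2 > \<dots> \<ge> 1\<close>. So the lists can be generated
  level by level, level \<open>m = Suc s\<close> contributing the factor \<open>block_level_factor t p s\<close>.
\<close>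
definition block_lists_upto :: "nat \<Rightarrow> (nat \<times> nat) list set" where
  "block_lists_upto N = {L \<in> block_lists. minus_spins L \<le> N}"

definition prepend_block :: "nat \<Rightarrow> nat \<times> (nat \<times> nat) list \<Rightarrow> (nat \<times> nat) list" where
  "prepend_block N = (\<lambda>(a, L). (a, N - minus_spins L) # L)"

lemma block_lists_upto_0: "block_lists_upto 0 = {[]}"
proof -
  have "L = []" if "L \<in> block_lists" "minus_spins L = 0" for L
    using that by (cases L) auto
  then show ?thesis by (auto simp: block_lists_upto_def)
qed

lemma block_lists_upto_Suc:
  "block_lists_upto (Suc N)
    = block_lists_upto N \<union> prepend_block (Suc N) ` ({1..} \<times> block_lists_upto N)"
proof (intro equalityI subsetI)
  fix L assume L: "L \<in> block_lists_upto (Suc N)"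
  show "L \<in> block_lists_upto N \<union> prepend_block (Suc N) ` ({1..} \<times> block_lists_upto N)"
  proof (cases "minus_spins L \<le> N")
    case False
    then obtain a b L' where L': "L = (a, b) # L'"
      by (cases L) auto
    with L False have "b = Suc N - minus_spins L'" "minus_spins L' \<le> N" "1 \<le> a" "L' \<in> block_lists"
      by (auto simp: block_lists_upto_def)
    then have "L = prepend_block (Suc N) (a, L')" "(a, L') \<in> {1..} \<times> block_lists_upto N"
      by (simp_all add: L' prepend_block_def block_lists_upto_def)
    then show ?thesis by blast
  qed (use L in \<open>simp add: block_lists_upto_def\<close>)
qed (auto simp: block_lists_upto_def prepend_block_def)

lemma list_weight_prepend_block:
  assumes "L \<in> block_lists_upto N"
  shows "list_weight t p (prepend_block (Suc N) (a, L)) = t * (p ^ Suc N) ^ a * list_weight t p L"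
proof -
  have "length (prepend_block (Suc N) (a, L)) = Suc (length L)"
    by (simp add: prepend_block_def)
  moreover have "inversions (prepend_block (Suc N) (a, L)) = Suc N * a + inversions L"
    using assms by (simp add: block_lists_upto_def prepend_block_def)
  ultimately show ?thesis
    by (simp add: list_weight_def power_add power_mult power_mult_distrib mult_ac)
qed

lemma has_sum_list_weight_upto:
  assumes "0 \<le> t" "0 \<le> p" "p < 1"
  shows "(list_weight t p has_sum (\<Prod>s<N. block_level_factor t p s)) (block_lists_upto N)"
proof (induction N)
  case 0
  show ?case by (auto simp: block_lists_upto_0 list_weight_def intro: has_sum_finiteI)
next
  case (Suc N)
  define r where "r = p ^ Suc N"
  define P where "P = (\<Prod>s<N. block_level_factor t p s)"
  have r: "norm r < 1"
    using assms by (simp add: r_def abs_less_iff power_less_one_iff del: power_Suc)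
  have "((\<lambda>(a, L). (t * r ^ a) * list_weight t p L) has_sum (t * (r / (1 - r))) * P)
      ({1..} \<times> block_lists_upto N)"
    unfolding P_def
    by (rule has_sum_Times_nonneg[OF _ _ has_sum_cmult_right[OF has_sum_geometric_from_1[OF r]]
          Suc])
      (use assms in \<open>auto simp: r_def list_weight_def\<close>)
  then have "((list_weight t p \<circ> prepend_block (Suc N)) has_sum (t * (r / (1 - r))) * P)
      ({1..} \<times> block_lists_upto N)"
    by (rule has_sum_cong[THEN iffD1, rotated]) (auto simp: r_def list_weight_prepend_block)
  moreover have "inj_on (prepend_block (Suc N)) ({1..} \<times> block_lists_upto N)"
    by (auto simp: inj_on_def prepend_block_def)
  ultimately have "(list_weight t p has_sum (t * (r / (1 - r))) * P)
      (prepend_block (Suc N) ` ({1..} \<times> block_lists_upto N))"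
    by (simp add: has_sum_reindex)
  moreover have "block_lists_upto N \<inter> prepend_block (Suc N) ` ({1..} \<times> block_lists_upto N) = {}"
    by (auto simp: block_lists_upto_def prepend_block_def)
  ultimately have "(list_weight t p has_sum P + (t * (r / (1 - r))) * P) (block_lists_upto (Suc N))"
    unfolding block_lists_upto_Suc using Suc P_def by (intro has_sum_Un_disjoint) auto
  then show ?case
    by (simp add: P_def r_def block_level_factor_def algebra_simps del: power_Suc)
qed

lemma has_sum_list_weight:
  assumes "0 \<le> t" "0 \<le> p" "p < 1"
  shows "(list_weight t p has_sum (\<Prod>s. block_level_factor t p s)) block_lists"
proof -
  have "block_lists = (\<Union>N. block_lists_upto N)"
    by (auto simp: block_lists_upto_def)
  moreover have "(list_weight t p has_sum (\<Prod>s. block_level_factor t p s))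
      (\<Union>N. block_lists_upto N)"
  proof (rule has_sum_incseq_Union[OF _ _ has_sum_list_weight_upto[OF assms]])
    show "incseq block_lists_upto"
      by (rule monoI) (auto simp: block_lists_upto_def)
    show "(\<lambda>N. \<Prod>s<N. block_level_factor t p s) \<longlonglongrightarrow> (\<Prod>s. block_level_factor t p s)"
      using convergent_prod_block_level_factor[OF assms] by (rule convergent_prod_LIMSEQ_lessThan)
  qed (use assms in \<open>simp add: list_weight_def\<close>)
  ultimately show ?thesis by simp
qed

section \<open>The partition function\<close>

lemma summable_centre_weight:
  assumes "0 < q" "q < 1"
  shows "centre_weight q c summable_on UNIV"
proof -
  have "((\<lambda>(n, L). exp (- 0) * centre_weight q c n * list_weight (exp (- 2 * 0)) (q\<^sup>2) L)
      has_sum (\<Prod>n. flip_pair_factor q c n)) (UNIV \<times> block_lists)"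
    using has_sum_weight_iff[OF assms(1)] has_sum_weight_zero[OF assms] by blast
  then have "(\<lambda>(n, L). exp (- 0) * centre_weight q c n * list_weight (exp (- 2 * 0)) (q\<^sup>2) L)
      summable_on (\<lambda>n. (n, [])) ` UNIV"
    by (rule summable_on_subset_banach[OF has_sum_imp_summable]) auto
  then show ?thesis
    by (subst (asm) summable_on_reindex) (auto simp: inj_on_def o_def list_weight_def)
qed

lemma has_sum_weight_factorised:
  assumes "0 < q" "q < 1"
  shows "(weight \<beta> q c has_sum
    exp (- \<beta>) * ((\<Sum>\<^sub>\<infinity>n. centre_weight q c n) * (\<Prod>s. block_level_factor (exp (- 2 * \<beta>)) (q\<^sup>2) s)))
    blocking"
proof -
  have "((\<lambda>(n, L). centre_weight q c n * list_weight (exp (- 2 * \<beta>)) (q\<^sup>2) L) has_sum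
      (\<Sum>\<^sub>\<infinity>n. centre_weight q c n) * (\<Prod>s. block_level_factor (exp (- 2 * \<beta>)) (q\<^sup>2) s))
      (UNIV \<times> block_lists)"
    using assms
    by (intro has_sum_Times_nonneg has_sum_infsum summable_centre_weight has_sum_list_weight)
      (auto simp: centre_weight_def list_weight_def power_less_one_iff abs_less_iff)
  from has_sum_cmult_right[OF this, of "exp (- \<beta>)"] show ?thesis
    unfolding has_sum_weight_iff[OF assms(1)] by (simp add: case_prod_unfold mult.assoc)
qed

lemma convergent_prod_one_plus_geometric:
  fixes p :: real
  assumes "0 \<le> p" "p < 1"
  shows "convergent_prod (\<lambda>s. 1 + a * p ^ Suc s)"
proof (rule convergent_prod_geometric_bound[OF assms, where C = "\<bar>a\<bar>"])
  fix n
  have "p ^ Suc n \<le> p ^ n" using assms by (intro power_decreasing) auto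
  then show "\<bar>1 + a * p ^ Suc n - 1\<bar> \<le> \<bar>a\<bar> * p ^ n"
    using assms by (simp add: abs_mult mult_left_mono del: power_Suc)
qed

lemma prodinf_block_level_factor_split:
  assumes "0 \<le> t" "0 \<le> p" "p < 1"
  shows "(\<Prod>s. block_level_factor t p s)
    = (\<Prod>s. 1 + (t - 1) * p ^ Suc s) * (\<Prod>s. block_level_factor 1 p s)"
proof -
  have factor: "1 + t * x / (1 - x) = (1 + (t - 1) * x) * (1 + 1 * x / (1 - x))"
    if "x < 1" for x :: real
    using that by (simp add: field_simps)
  have "p ^ Suc s < 1" for s
    using assms by (simp add: power_less_one_iff del: power_Suc)
  then have "block_level_factor t p s = (1 + (t - 1) * p ^ Suc s) * block_level_factor 1 p s" for s
    unfolding block_level_factor_def by (rule factor)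
  then show ?thesis
    using prodinf_mult[OF convergent_prod_one_plus_geometric[OF assms(2,3)]
        convergent_prod_block_level_factor[of 1, OF _ assms(2,3)]]
    by simp
qed

lemma prodinf_mult_flip_pair_factor:
  assumes "0 < q" "q < 1"
  shows "(\<Prod>s. 1 + a * (q\<^sup>2) ^ Suc s) * (\<Prod>n. flip_pair_factor q c n)
    = (\<Prod>n. (1 + a * (q\<^sup>2) ^ Suc n) * flip_pair_factor q c n)"
  using assms
  by (intro prodinf_mult convergent_prod_one_plus_geometric convergent_prod_flip_pair_factor)
    (auto simp: power_less_one_iff)

lemma triple_factor_eq_flip_pair_factor:
  assumes "0 < q"
  shows "(let i = real (Suc n) in
      (1 + (x - 1) * q powr (2 * i)) * (1 + q powr (2 * (i - c))) * (1 + q powr (2 * (i - 1 + c))))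
    = (1 + (x - 1) * (q\<^sup>2) ^ Suc n) * flip_pair_factor q c n"
proof -
  have "2 * real (Suc n) = real (2 * Suc n)" by simp
  then have "q powr (2 * real (Suc n)) = (q\<^sup>2) ^ Suc n"
    by (simp only: powr_realpow[OF assms] power_mult)
  then show ?thesis
    by (simp add: Let_def flip_pair_factor_def mult.assoc)
qed

lemma has_sum_weight_product:
  assumes "0 < q" "q < 1"
  shows "(weight \<beta> q c has_sum exp (- \<beta>) * (\<Prod>n. let i = real (Suc n) in
          (1 + (exp (- 2 * \<beta>) - 1) * q powr (2 * i))
        * (1 + q powr (2 * (i - c)))
        * (1 + q powr (2 * (i - 1 + c))))) blocking"
proof -
  define t p J where "t = exp (- 2 * \<beta>)" and "p = q\<^sup>2" and "J = (\<Sum>\<^sub>\<infinity>n. centre_weight q c n)"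
  have p: "0 \<le> p" "p < 1" using assms by (auto simp: p_def power_less_one_iff)
  have "(weight 0 q c has_sum J * (\<Prod>s. block_level_factor 1 p s)) blocking"
    using has_sum_weight_factorised[OF assms, of 0 c] by (simp add: J_def p_def)
  then have "(\<Prod>n. flip_pair_factor q c n) = J * (\<Prod>s. block_level_factor 1 p s)"
    using has_sum_weight_zero[OF assms] by (rule has_sum_unique[rotated])
  then have "exp (- \<beta>) * (J * (\<Prod>s. block_level_factor t p s))
      = exp (- \<beta>) * ((\<Prod>s. 1 + (t - 1) * p ^ Suc s) * (\<Prod>n. flip_pair_factor q c n))"
    using prodinf_block_level_factor_split[OF _ p, of t] by (simp add: t_def)
  also have "\<dots> = exp (- \<beta>) * (\<Prod>n. let i = real (Suc n) in
          (1 + (exp (- 2 * \<beta>) - 1) * q powr (2 * i))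
        * (1 + q powr (2 * (i - c)))
        * (1 + q powr (2 * (i - 1 + c))))"
    unfolding p_def t_def prodinf_mult_flip_pair_factor[OF assms]
      triple_factor_eq_flip_pair_factor[OF assms(1)] ..
  finally show ?thesis
    using has_sum_weight_factorised[OF assms, of \<beta> c] by (simp add: J_def t_def p_def)
qed

theorem corollary1p2:
  fixes c \<beta> q :: real
  assumes "\<beta> \<ge> 0" and "0 < q" and "q < 1"
  shows "weight \<beta> q c summable_on blocking
    \<and> partition_fn \<beta> q c =
      exp (- \<beta>) * (\<Prod>n. let i = real (Suc n) in
          (1 + (exp (- 2 * \<beta>) - 1) * q powr (2 * i))
        * (1 + q powr (2 * (i - c)))
        * (1 + q powr (2 * (i - 1 + c))))"
  using has_sum_weight_product[OF assms(2,3), of \<beta> c]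
  by (auto simp: partition_fn_def intro: has_sum_imp_summable infsumI)

end
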